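(* Let $A(n)$ be the number of alternating permutations of $[n]$ and $A_0(2m)$ the number of cyclically alternating permutations of $[2m]$. Then $$\frac{A_0(2m)}{A(2m)}\to\frac{\pi}{4}\quad\text{as } m\to\infty.$$
   Context: $[n]=\{1,2,\ldots,n\}$. A permutation $\sigma$ of $[n]$ is alternating if $\sigma(i)<\sigma(i+1)$ for odd $i$ and $\sigma(i)>\sigma(i+1)$ for even $i$, $1\le i\le n-1$. For $n$ even, $\sigma$ is cyclically alternating if it is alternating and $\sigma(n)>\sigma(1)$. *)

theory Defs
  imports "HOL-Analysis.Analysis" "HOL-Combinatorics.Permutations"
begin

definition alternating :: "nat \<Rightarrow> (nat \<Rightarrow> nat) \<Rightarrow> bool" where
  "alternating n \<sigma> \<longleftrightarrow>
     (\<forall>i. 1 \<le> i \<and> i \<le> n - 1 \<longrightarrow>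
        (odd i \<longrightarrow> \<sigma> i < \<sigma> (i + 1)) \<and> (even i \<longrightarrow> \<sigma> i > \<sigma> (i + 1)))"

definition cyc_alternating :: "nat \<Rightarrow> (nat \<Rightarrow> nat) \<Rightarrow> bool" where
  "cyc_alternating n \<sigma> \<longleftrightarrow> alternating n \<sigma> \<and> \<sigma> n > \<sigma> 1"

definition A :: "nat \<Rightarrow> nat" where
  "A n = card {\<sigma>. \<sigma> permutes {1..n} \<and> alternating n \<sigma>}"

definition A0 :: "nat \<Rightarrow> nat" where
  "A0 n = card {\<sigma>. \<sigma> permutes {1..n} \<and> cyc_alternating n \<sigma>}"

end

(*
  Splitting an alternating arrangement at its largest entry gives Andre's recurrence
  A(n+1) = sum over odd k <= n of (n choose k) A(k) A(n-k) for n >= 1. For the exponential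
  generating function E this says E' = 1 + T E with T the odd part of E; together with E(0) = 1
  it forces E(x) E(-x) = 1 and then 2 E' = 1 + E^2, so E(z) = tan (z/2 + pi/4) = sec z + tan z.
  Reading a cyclically alternating permutation of [2m] cyclically from just after its maximum
  gives an alternating permutation of [2m-1] and one of m possible cut positions, whence
  A0(2m) = m A(2m-1). In the disc |z| < 3 the only singularity of E is a simple pole at pi/2
  with principal part 2/(pi/2 - z), so Cauchy's estimate on |z| = 2 gives
  A(n)/n! = 2 (2/pi)^(n+1) + O(2^-n), and A0(2m)/A(2m) = m A(2m-1)/A(2m) tends to pi/4.
*)

theory Submission
  imports Defs "HOL-Combinatorics.Multiset_Permutations" "HOL-Complex_Analysis.Complex_Analysis"
begin

unbundle no vec_syntax

definition alternating_list :: "'a::linorder list \<Rightarrow> bool" where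
  "alternating_list xs \<longleftrightarrow> (\<forall>i. Suc i < length xs \<longrightarrow>
      (even i \<longrightarrow> xs ! i < xs ! Suc i) \<and> (odd i \<longrightarrow> xs ! Suc i < xs ! i))"

lemma alternating_list_Nil [simp]: "alternating_list []"
  and alternating_list_singleton [simp]: "alternating_list [x]"
  by (simp_all add: alternating_list_def)

lemma alternating_list_appendD: "alternating_list (xs @ ys) \<Longrightarrow> alternating_list xs"
  unfolding alternating_list_def
  by (metis (no_types, lifting) Suc_lessD length_append nth_append trans_less_add1)

lemma alternating_list_append_evenD:
  assumes "even (length xs)" and "alternating_list (xs @ ys)"
  shows "alternating_list ys"
  unfolding alternating_list_def
proof (intro allI impI)
  fix j assume "Suc j < length ys"
  with assms(2) have "(even (length xs + j) \<longrightarrow> ys ! j < ys ! Suc j) \<and>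
                      (odd (length xs + j) \<longrightarrow> ys ! Suc j < ys ! j)"
    unfolding alternating_list_def
    by (auto simp flip: add_Suc_right elim!: allE[of _ "length xs + j"])
  with assms(1) show "(even j \<longrightarrow> ys ! j < ys ! Suc j) \<and> (odd j \<longrightarrow> ys ! Suc j < ys ! j)"
    by simp
qed

lemma alternating_list_append_even:
  assumes "even (length xs)"
  shows "alternating_list (xs @ ys) \<longleftrightarrow> alternating_list xs \<and> alternating_list ys \<and>
           (xs \<noteq> [] \<longrightarrow> ys \<noteq> [] \<longrightarrow> hd ys < last xs)"
    (is "?lhs \<longleftrightarrow> ?rhs")
proof -
  have junction: "(xs @ ys) ! i = last xs" "(xs @ ys) ! Suc i = hd ys" "odd i"
    if "Suc i = length xs" and "ys \<noteq> []" for i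
  proof -
    from that have "xs \<noteq> []" "i = length xs - 1" by auto
    with that assms show "(xs @ ys) ! i = last xs" "(xs @ ys) ! Suc i = hd ys" "odd i"
      by (auto simp: nth_append last_conv_nth hd_conv_nth)
  qed
  show ?thesis
  proof
    assume ?lhs
    moreover have "hd ys < last xs" if "xs \<noteq> []" "ys \<noteq> []"
      using \<open>?lhs\<close> junction[of "length xs - 1"] that
      unfolding alternating_list_def by (auto elim!: allE[of _ "length xs - 1"])
    ultimately show ?rhs
      using assms alternating_list_appendD alternating_list_append_evenD by blast
  next
    assume ?rhs
    show ?lhs unfolding alternating_list_def
    proof (intro allI impI)
      fix i assume i: "Suc i < length (xs @ ys)"
      consider "Suc i < length xs" | "Suc i = length xs" "ys \<noteq> []" | j where "i = length xs + j"
        using i by (metis le_iff_add length_append less_Suc_eq nat_less_le not_less_eq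
            self_append_conv)
      then show "(even i \<longrightarrow> (xs @ ys) ! i < (xs @ ys) ! Suc i) \<and>
                 (odd i \<longrightarrow> (xs @ ys) ! Suc i < (xs @ ys) ! i)"
      proof cases
        case 1
        with \<open>?rhs\<close> show ?thesis by (simp add: alternating_list_def nth_append)
      next
        case 2
        with \<open>?rhs\<close> show ?thesis using junction[OF 2] by auto
      next
        case 3
        with i \<open>?rhs\<close> assms show ?thesis by (simp add: alternating_list_def flip: add_Suc_right)
      qed
    qed
  qed
qed

lemma alternating_list_snoc:
  "alternating_list (xs @ [x]) \<longleftrightarrow> alternating_list xs \<and>
     (xs \<noteq> [] \<longrightarrow> (if even (length xs) then x < last xs else last xs < x))"
proof (cases xs rule: rev_cases)
  case (snoc ys y)
  let ?step = "\<lambda>zs i. (even i \<longrightarrow> zs ! i < zs ! Suc i) \<and> (odd i \<longrightarrow> zs ! Suc i < zs ! i)"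
  have "alternating_list (xs @ [x]) \<longleftrightarrow>
          (\<forall>i. Suc i < length xs \<longrightarrow> ?step (xs @ [x]) i) \<and> ?step (xs @ [x]) (length ys)"
    unfolding alternating_list_def snoc by (auto simp: less_Suc_eq)
  also have "(\<forall>i. Suc i < length xs \<longrightarrow> ?step (xs @ [x]) i) \<longleftrightarrow> alternating_list xs"
    unfolding alternating_list_def by (simp add: nth_append cong: imp_cong)
  finally show ?thesis
    using snoc by (simp add: nth_append)
qed simp

lemma alternating_list_Cons_Cons: "alternating_list (x # y # zs) \<Longrightarrow> x < y"
  by (auto simp: alternating_list_def elim!: allE[of _ 0])

lemma alternating_list_split_max:
  assumes less: "\<forall>x \<in> set ys \<union> set zs. x < M" and nonempty: "ys @ zs \<noteq> []"
  shows "alternating_list (ys @ M # zs) \<longleftrightarrow>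
           odd (length ys) \<and> alternating_list ys \<and> alternating_list zs"
proof (cases "odd (length ys)")
  case True
  then have "ys \<noteq> []" by auto
  then have "alternating_list (ys @ [M]) \<longleftrightarrow> alternating_list ys"
    using True less by (simp add: alternating_list_snoc)
  moreover have "hd zs < M" if "zs \<noteq> []"
    using that less by simp
  ultimately show ?thesis
    using alternating_list_append_even[of "ys @ [M]" zs] True by auto
next
  case False
  have "\<not> alternating_list (ys @ M # zs)"
  proof (cases "ys = []")
    case True
    with nonempty obtain z zs' where "zs = z # zs'" by (cases zs) auto
    with True less show ?thesis by (auto dest: alternating_list_Cons_Cons)
  next
    case ys: False
    have "last ys < M" using ys less by simp
    then have "\<not> alternating_list (ys @ [M])"
      using False ys by (auto simp: alternating_list_snoc)
    then show ?thesis
      using alternating_list_appendD[of "ys @ [M]" zs] by auto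
  qed
  with False show ?thesis by blast
qed

lemma alternating_list_rotate_max:
  assumes less: "\<forall>x \<in> set ys \<union> set zs. x < M"
    and odd: "odd (length ys)" and even: "even (length zs)"
  shows "alternating_list (ys @ M # zs) \<and> hd (ys @ M # zs) < last (ys @ M # zs)
           \<longleftrightarrow> alternating_list (zs @ ys)"
proof -
  have "ys \<noteq> []" using odd by auto
  with less have "hd ys < M" by simp
  with \<open>ys \<noteq> []\<close> show ?thesis
    using alternating_list_split_max[OF less] alternating_list_append_even[OF even] odd
    by auto
qed

definition alternating_lists :: "'a::linorder set \<Rightarrow> 'a list set" where
  "alternating_lists S = {xs \<in> permutations_of_set S. alternating_list xs}"

lemma finite_alternating_lists [simp]: "finite (alternating_lists S)"
  by (simp add: alternating_lists_def)

fun zigzag :: "nat \<Rightarrow> nat" where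
  "zigzag 0 = 1"
| "zigzag (Suc n) =
     (if n = 0 then 1 else \<Sum>k | k \<le> n \<and> odd k. (n choose k) * zigzag k * zigzag (n - k))"

declare zigzag.simps(2) [simp del]

lemma sum_subsets_by_card:
  assumes "finite S"
  shows "(\<Sum>T | T \<subseteq> S \<and> P (card T). f (card T)) =
           (\<Sum>k | k \<le> card S \<and> P k. of_nat (card S choose k) * f k)"
proof -
  let ?Ts = "{T. T \<subseteq> S \<and> P (card T)}"
  have "(\<Sum>T \<in> ?Ts. f (card T)) =
          (\<Sum>k | k \<le> card S \<and> P k. \<Sum>T \<in> {T \<in> ?Ts. card T = k}. f (card T))"
    by (rule sum.group[symmetric, where g = card]) (use assms in \<open>auto intro: card_mono\<close>)
  also have "\<dots> = (\<Sum>k | k \<le> card S \<and> P k. of_nat (card S choose k) * f k)"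
  proof (rule sum.cong[OF refl])
    fix k assume "k \<in> {k. k \<le> card S \<and> P k}"
    then have "{T \<in> ?Ts. card T = k} = {T. T \<subseteq> S \<and> card T = k}" by auto
    then show "(\<Sum>T \<in> {T \<in> ?Ts. card T = k}. f (card T)) = of_nat (card S choose k) * f k"
      using n_subsets[OF assms] by simp
  qed
  finally show ?thesis .
qed

lemma bij_betw_alternating_lists_insert_max:
  fixes M :: "'a::linorder"
  assumes "finite T" and "T \<noteq> {}" and less: "\<forall>x \<in> T. x < M"
  shows "bij_betw (\<lambda>(U, ys, zs). ys @ M # zs)
           (SIGMA U : {U. U \<subseteq> T \<and> odd (card U)}. alternating_lists U \<times> alternating_lists (T - U))
           (alternating_lists (insert M T))"
proof (rule bij_betwI')
  fix p assume "p \<in> (SIGMA U : {U. U \<subseteq> T \<and> odd (card U)}.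
                       alternating_lists U \<times> alternating_lists (T - U))"
  then obtain U ys zs where p: "p = (U, ys, zs)" and U: "U \<subseteq> T" "odd (card U)"
    and ys: "ys \<in> permutations_of_set U" "alternating_list ys"
    and zs: "zs \<in> permutations_of_set (T - U)" "alternating_list zs"
    by (auto simp: alternating_lists_def)
  have "odd (length ys)"
    using ys U by (metis distinct_card permutations_of_setD)
  moreover from this have "ys \<noteq> []"
    by auto
  moreover have "\<forall>x \<in> set ys \<union> set zs. x < M"
    using ys zs U less by (auto dest: permutations_of_setD)
  moreover have "ys @ M # zs \<in> permutations_of_set (insert M T)"
    using ys zs U less by (auto simp: permutations_of_set_def)
  ultimately show "(case p of (U, ys, zs) \<Rightarrow> ys @ M # zs) \<in> alternating_lists (insert M T)"
    using ys zs p alternating_list_split_max[of ys zs M] by (auto simp: alternating_lists_def)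
next
  fix p q
  assume "p \<in> (SIGMA U : {U. U \<subseteq> T \<and> odd (card U)}.
                 alternating_lists U \<times> alternating_lists (T - U))"
    and "q \<in> (SIGMA U : {U. U \<subseteq> T \<and> odd (card U)}.
                 alternating_lists U \<times> alternating_lists (T - U))"
  then obtain ys zs ys' zs' where "p = (set ys, ys, zs)" and "q = (set ys', ys', zs')"
    and "M \<notin> set ys" "M \<notin> set zs"
    using less by (fastforce simp: alternating_lists_def permutations_of_set_def)
  then show "((case p of (U, ys, zs) \<Rightarrow> ys @ M # zs) = (case q of (U, ys, zs) \<Rightarrow> ys @ M # zs)) =
               (p = q)"
    by (auto simp: append_Cons_eq_iff)
next
  fix xs assume "xs \<in> alternating_lists (insert M T)"
  then have xs: "set xs = insert M T" "distinct xs" "alternating_list xs"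
    by (auto simp: alternating_lists_def permutations_of_set_def)
  then obtain ys zs where split: "xs = ys @ M # zs"
    by (metis insertI1 split_list)
  have sets: "set ys \<subseteq> T" "set zs = T - set ys"
    using xs split less by auto
  then have "\<forall>x \<in> set ys \<union> set zs. x < M"
    using less by blast
  moreover have "ys @ zs \<noteq> []"
    using split xs \<open>T \<noteq> {}\<close> less by auto
  ultimately have "odd (length ys) \<and> alternating_list ys \<and> alternating_list zs"
    using xs split alternating_list_split_max by blast
  with xs split sets show "\<exists>p \<in> (SIGMA U : {U. U \<subseteq> T \<and> odd (card U)}.
                                  alternating_lists U \<times> alternating_lists (T - U)).
                             xs = (case p of (U, ys, zs) \<Rightarrow> ys @ M # zs)"
    by (intro bexI[of _ "(set ys, ys, zs)"])
      (auto simp: alternating_lists_def permutations_of_set_def distinct_card)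
qed

theorem card_alternating_lists:
  "finite S \<Longrightarrow> card (alternating_lists S) = zigzag (card S)"
proof (induction "card S" arbitrary: S rule: less_induct)
  case less
  consider "card S \<le> 1" | n where "card S = Suc n" "n \<noteq> 0"
    by (cases "card S") auto
  then show ?case
  proof cases
    case 1
    have "alternating_list xs" if "xs \<in> permutations_of_set S" for xs
      using that 1 less.prems by (auto simp: alternating_list_def length_finite_permutations_of_set)
    then have "alternating_lists S = permutations_of_set S"
      by (auto simp: alternating_lists_def)
    with 1 less.prems show ?thesis
      by (auto simp: le_Suc_eq zigzag.simps(2))
  next
    case 2
    define M T where "M = Max S" and "T = S - {M}"
    have "M \<in> S"
      using 2 less.prems unfolding M_def by (intro Max_in) auto
    with 2 less.prems have S: "S = insert M T" and "finite T" and card_T: "card T = n"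
      by (auto simp: T_def)
    have less_M: "\<forall>x \<in> T. x < M"
      using less.prems by (auto simp: M_def T_def order.not_eq_order_implies_strict)
    have IH: "card (alternating_lists U) = zigzag (card U)" if "U \<subseteq> T" for U
      using less.hyps[of U] finite_subset[OF that \<open>finite T\<close>] card_mono[OF \<open>finite T\<close> that]
        2 card_T by simp
    have "T \<noteq> {}"
      using 2 card_T by auto
    have "card (alternating_lists S) =
            card (SIGMA U : {U. U \<subseteq> T \<and> odd (card U)}.
                    alternating_lists U \<times> alternating_lists (T - U))"
      using bij_betw_alternating_lists_insert_max[OF \<open>finite T\<close> \<open>T \<noteq> {}\<close> less_M] S
      by (simp add: bij_betw_same_card)
    also have "\<dots> = (\<Sum>U | U \<subseteq> T \<and> odd (card U). zigzag (card U) * zigzag (n - card U))"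
      using \<open>finite T\<close> card_T
      by (auto simp: card_cartesian_product IH card_Diff_subset finite_subset intro!: sum.cong)
    also have "\<dots> = (\<Sum>k | k \<le> n \<and> odd k. (n choose k) * zigzag k * zigzag (n - k))"
      using \<open>finite T\<close> card_T
      by (subst sum_subsets_by_card[where f = "\<lambda>k. zigzag k * zigzag (n - k)"])
        (simp_all add: mult.assoc)
    also have "\<dots> = zigzag (card S)"
      using 2 by (simp add: zigzag.simps(2))
    finally show ?thesis .
  qed
qed

lemma drop_Cons_take_eqD:
  assumes "x \<notin> set xs" and "x \<notin> set ys" and "k \<le> length xs" and "l \<le> length ys"
    and "drop k xs @ x # take k xs = drop l ys @ x # take l ys"
  shows "k = l \<and> xs = ys"
proof -
  have "drop k xs = drop l ys" and take: "take k xs = take l ys"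
    using assms append_Cons_eq_iff[of x "drop k xs" "take k xs"]
    by (auto dest: in_set_dropD in_set_takeD)
  moreover have "k = l"
    using arg_cong[OF take, of length] assms(3,4) by simp
  ultimately show ?thesis
    by (metis append_take_drop_id)
qed

lemma cyclically_alternating_insert_max:
  assumes ws: "ws \<in> alternating_lists T" and less: "\<forall>x \<in> T. x < M"
    and "even k" and "k < length ws" and "odd (length ws)"
  shows "drop k ws @ M # take k ws \<in> {xs \<in> alternating_lists (insert M T). hd xs < last xs}"
proof -
  define zs ys where "zs = take k ws" and "ys = drop k ws"
  have ws_eq: "ws = zs @ ys"
    by (simp add: zs_def ys_def)
  have "odd (length ys)" "even (length zs)"
    using assms(3-5) by (auto simp: zs_def ys_def)
  moreover have sets: "set (zs @ ys) = T" "distinct (zs @ ys)"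
    using ws unfolding ws_eq by (auto simp: alternating_lists_def permutations_of_set_def)
  moreover from this have "\<forall>x \<in> set ys \<union> set zs. x < M"
    using less by auto
  moreover have "alternating_list (zs @ ys)"
    using ws unfolding ws_eq by (simp add: alternating_lists_def)
  ultimately have "alternating_list (ys @ M # zs) \<and> hd (ys @ M # zs) < last (ys @ M # zs)"
    using alternating_list_rotate_max by blast
  moreover have "ys @ M # zs \<in> permutations_of_set (insert M T)"
    using sets less by (auto simp: permutations_of_set_def)
  ultimately show ?thesis
    by (simp add: alternating_lists_def ys_def zs_def)
qed

lemma cyclically_alternating_cut_max:
  assumes xs: "xs \<in> alternating_lists (insert M T)" "hd xs < last xs"
    and less: "\<forall>x \<in> T. x < M" and "odd (card T)"
  obtains ws k where "ws \<in> alternating_lists T" and "even k" and "k < card T"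
    and "xs = drop k ws @ M # take k ws"
proof -
  from xs have xs': "set xs = insert M T" "distinct xs" "alternating_list xs"
    by (auto simp: alternating_lists_def permutations_of_set_def)
  then obtain ys zs where split: "xs = ys @ M # zs"
    by (metis insertI1 split_list)
  have sets: "set (zs @ ys) = T" "distinct (zs @ ys)"
    using xs' split less by auto
  then have less': "\<forall>x \<in> set ys \<union> set zs. x < M"
    using less by auto
  have length: "length zs + length ys = card T"
    using sets by (metis distinct_card length_append)
  then have "ys @ zs \<noteq> []"
    using \<open>odd (card T)\<close> by auto
  then have "odd (length ys)"
    using xs' split alternating_list_split_max[OF less'] by simp
  with length \<open>odd (card T)\<close> have zs: "even (length zs)" "length zs < card T"
    by presburger+
  moreover have "alternating_list (ys @ M # zs) \<and> hd (ys @ M # zs) < last (ys @ M # zs)"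
    using xs'(3) xs(2) split by simp
  ultimately have "alternating_list (zs @ ys)"
    using alternating_list_rotate_max[OF less' \<open>odd (length ys)\<close>] by simp
  with sets have "zs @ ys \<in> alternating_lists T"
    by (simp add: alternating_lists_def permutations_of_set_def)
  moreover have "xs = drop (length zs) (zs @ ys) @ M # take (length zs) (zs @ ys)"
    using split by simp
  ultimately show ?thesis
    using zs that by blast
qed

text \<open>Read cyclically from just after \<open>M\<close>, a cyclically alternating arrangement of \<open>insert M T\<close>
  becomes an alternating arrangement \<open>ws\<close> of \<open>T\<close>; \<open>M\<close> was in front of one of the suffixes
  of \<open>ws\<close> of odd length.\<close>

lemma bij_betw_cyclically_alternating_lists:
  fixes M :: "'a::linorder"
  assumes "finite T" and "odd (card T)" and less: "\<forall>x \<in> T. x < M"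
  shows "bij_betw (\<lambda>(q, ws). drop (2 * q) ws @ M # take (2 * q) ws)
           ({..<Suc (card T) div 2} \<times> alternating_lists T)
           {xs \<in> alternating_lists (insert M T). hd xs < last xs}"
proof (rule bij_betwI')
  have length: "length ws = card T" if "ws \<in> alternating_lists T" for ws
    using that \<open>finite T\<close> by (simp add: alternating_lists_def length_finite_permutations_of_set)
  fix p assume "p \<in> {..<Suc (card T) div 2} \<times> alternating_lists T"
  then obtain q ws where p: "p = (q, ws)" and "q < Suc (card T) div 2"
    and ws: "ws \<in> alternating_lists T"
    by auto
  with \<open>odd (card T)\<close> have "2 * q < length ws"
    using length[OF ws] by presburger
  then show "(case p of (q, ws) \<Rightarrow> drop (2 * q) ws @ M # take (2 * q) ws)
               \<in> {xs \<in> alternating_lists (insert M T). hd xs < last xs}"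
    unfolding p prod.case using \<open>odd (card T)\<close> length[OF ws]
    by (intro cyclically_alternating_insert_max[OF ws less]) simp_all
next
  fix p p' assume "p \<in> {..<Suc (card T) div 2} \<times> alternating_lists T"
    and "p' \<in> {..<Suc (card T) div 2} \<times> alternating_lists T"
  moreover obtain q ws q' ws' where "p = (q, ws)" "p' = (q', ws')"
    by (cases p, cases p')
  ultimately have "M \<notin> set ws" "M \<notin> set ws'" "2 * q \<le> length ws" "2 * q' \<le> length ws'"
    and pq: "p = (q, ws)" "p' = (q', ws')"
    using less \<open>finite T\<close> \<open>odd (card T)\<close>
    by (auto simp: alternating_lists_def length_finite_permutations_of_set
        permutations_of_set_def elim!: oddE)
  then show "((case p of (q, ws) \<Rightarrow> drop (2 * q) ws @ M # take (2 * q) ws) =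
                (case p' of (q, ws) \<Rightarrow> drop (2 * q) ws @ M # take (2 * q) ws)) = (p = p')"
    using drop_Cons_take_eqD[of M ws ws' "2 * q" "2 * q'"] by auto
next
  fix xs assume "xs \<in> {xs \<in> alternating_lists (insert M T). hd xs < last xs}"
  then obtain ws k where "ws \<in> alternating_lists T" "even k" "k < card T"
    and "xs = drop k ws @ M # take k ws"
    by (auto elim: cyclically_alternating_cut_max[OF _ _ less \<open>odd (card T)\<close>])
  then show "\<exists>p \<in> {..<Suc (card T) div 2} \<times> alternating_lists T.
               xs = (case p of (q, ws) \<Rightarrow> drop (2 * q) ws @ M # take (2 * q) ws)"
    by (intro bexI[of _ "(k div 2, ws)"]) (auto elim!: evenE)
qed

lemma bij_betw_permutes_map:
  assumes "distinct xs"
  shows "bij_betw (\<lambda>\<sigma>. map \<sigma> xs) {\<sigma>. \<sigma> permutes set xs} (permutations_of_set (set xs))"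
proof -
  have "inj_on (\<lambda>\<sigma>. map \<sigma> xs) {\<sigma>. \<sigma> permutes set xs}"
  proof (rule inj_onI, rule ext)
    fix \<sigma> \<tau> x
    assume "\<sigma> \<in> {\<sigma>. \<sigma> permutes set xs}" "\<tau> \<in> {\<sigma>. \<sigma> permutes set xs}" "map \<sigma> xs = map \<tau> xs"
    then show "\<sigma> x = \<tau> x"
      by (cases "x \<in> set xs") (auto simp: permutes_not_in)
  qed
  moreover have "(\<lambda>\<sigma>. map \<sigma> xs) ` {\<sigma>. \<sigma> permutes set xs} \<subseteq> permutations_of_set (set xs)"
    using assms by (auto simp: permutations_of_set_def permutes_image distinct_map
        dest: permutes_inj_on)
  moreover have "card {\<sigma>. \<sigma> permutes set xs} = card (permutations_of_set (set xs))"
    by (simp add: card_permutations[OF refl])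
  ultimately show ?thesis
    unfolding bij_betw_def by (metis card_image card_subset_eq finite_permutations_of_set)
qed

lemma card_permutes_filter_map:
  assumes "distinct xs"
  shows "card {\<sigma>. \<sigma> permutes set xs \<and> P (map \<sigma> xs)} =
           card {ys \<in> permutations_of_set (set xs). P ys}"
proof (rule bij_betw_same_card[OF bij_betw_subset[OF bij_betw_permutes_map[OF assms]]])
  have "(\<lambda>\<sigma>. map \<sigma> xs) ` {\<sigma>. \<sigma> permutes set xs \<and> P (map \<sigma> xs)} =
          {ys \<in> (\<lambda>\<sigma>. map \<sigma> xs) ` {\<sigma>. \<sigma> permutes set xs}. P ys}"
    by auto
  also have "\<dots> = {ys \<in> permutations_of_set (set xs). P ys}"
    using bij_betw_imp_surj_on[OF bij_betw_permutes_map[OF assms]] by simp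
  finally show "(\<lambda>\<sigma>. map \<sigma> xs) ` {\<sigma>. \<sigma> permutes set xs \<and> P (map \<sigma> xs)} =
          {ys \<in> permutations_of_set (set xs). P ys}" .
qed auto

lemma alternating_iff_alternating_list:
  "alternating n \<sigma> \<longleftrightarrow> alternating_list (map \<sigma> [1..<Suc n])"
proof -
  let ?P = "\<lambda>i. (odd i \<longrightarrow> \<sigma> i < \<sigma> (i + 1)) \<and> (even i \<longrightarrow> \<sigma> (i + 1) < \<sigma> i)"
  have "alternating_list (map \<sigma> [1..<Suc n]) \<longleftrightarrow> (\<forall>j. Suc j < n \<longrightarrow> ?P (Suc j))"
    by (simp add: alternating_list_def nth_map_upt del: upt_Suc cong: imp_cong)
  also have "\<dots> \<longleftrightarrow> (\<forall>i. 1 \<le> i \<and> i \<le> n - 1 \<longrightarrow> ?P i)"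
  proof (intro iffI allI impI)
    fix i assume "\<forall>j. Suc j < n \<longrightarrow> ?P (Suc j)" and "1 \<le> i \<and> i \<le> n - 1"
    then show "?P i"
      by (cases i) auto
  next
    fix j assume "\<forall>i. 1 \<le> i \<and> i \<le> n - 1 \<longrightarrow> ?P i" and "Suc j < n"
    then show "?P (Suc j)"
      by simp
  qed
  finally show ?thesis
    by (simp add: alternating_def)
qed

lemma A_eq_zigzag: "A n = zigzag n"
proof -
  have "A n = card {\<sigma>. \<sigma> permutes set [1..<Suc n] \<and> alternating_list (map \<sigma> [1..<Suc n])}"
    by (simp only: A_def alternating_iff_alternating_list set_upt atLeastLessThanSuc_atLeastAtMost)
  also have "\<dots> = card (alternating_lists {1..n})"
    using card_permutes_filter_map[of "[1..<Suc n]" alternating_list]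
    by (simp only: distinct_upt alternating_lists_def set_upt atLeastLessThanSuc_atLeastAtMost)
  finally show ?thesis
    by (simp add: card_alternating_lists)
qed

lemma A0_eq_zigzag:
  assumes "m \<noteq> 0"
  shows "A0 (2 * m) = m * zigzag (2 * m - 1)"
proof -
  let ?xs = "[1..<Suc (2 * m)]"
  have "hd (map \<sigma> ?xs) = \<sigma> 1" "last (map \<sigma> ?xs) = \<sigma> (2 * m)" for \<sigma> :: "nat \<Rightarrow> nat"
    using assms by (simp_all add: hd_map last_map del: upt_Suc)
  then have "A0 (2 * m) = card {\<sigma>. \<sigma> permutes set ?xs \<and>
               (\<lambda>xs. alternating_list xs \<and> hd xs < last xs) (map \<sigma> ?xs)}"
    by (simp add: A0_def cyc_alternating_def alternating_iff_alternating_list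
        atLeastLessThanSuc_atLeastAtMost del: upt_Suc)
  also have "\<dots> = card {xs \<in> alternating_lists {1..2 * m}. hd xs < last xs}"
    using card_permutes_filter_map[of ?xs "\<lambda>xs. alternating_list xs \<and> hd xs < last xs"]
    by (simp add: alternating_lists_def atLeastLessThanSuc_atLeastAtMost del: upt_Suc)
  also have "{1..2 * m} = insert (2 * m) {1..2 * m - 1}"
    using assms by auto
  also have "card {xs \<in> alternating_lists (insert (2 * m) {1..2 * m - 1}). hd xs < last xs} =
               card ({..<Suc (2 * m - 1) div 2} \<times> alternating_lists {1..2 * m - 1})"
    using bij_betw_same_card[OF bij_betw_cyclically_alternating_lists[of "{1..2 * m - 1}" "2 * m"]]
      assms by fastforce
  also have "\<dots> = m * zigzag (2 * m - 1)"
    using assms by (simp add: card_cartesian_product card_alternating_lists)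
  finally show ?thesis .
qed

lemma fps_eq_0_if_deriv_eq_mult:
  fixes Q R :: "'a::{idom, semiring_char_0} fps"
  assumes "fps_deriv Q = R * Q" and "Q $ 0 = 0"
  shows "Q = 0"
proof (rule fps_ext)
  fix n show "Q $ n = 0 $ n"
  proof (induction n rule: less_induct)
    case (less n)
    show ?case
    proof (cases n)
      case (Suc m)
      have "of_nat (Suc m) * Q $ Suc m = (R * Q) $ m"
        using fps_deriv_nth[of Q m] assms(1) by (simp add: mult.commute)
      also have "\<dots> = 0"
        using less Suc by (auto simp: fps_mult_nth intro!: sum.neutral)
      finally show ?thesis
        using Suc by (metis mult_eq_0_iff of_nat_eq_0_iff nat.distinct(1) fps_zero_nth)
    qed (use assms in simp)
  qed
qed

lemma fps_riccati_unique:
  fixes X Y :: "'a::field_char_0 fps"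
  assumes "2 * fps_deriv X = 1 + X * X" and "2 * fps_deriv Y = 1 + Y * Y" and "X $ 0 = Y $ 0"
  shows "X = Y"
proof -
  have "fps_deriv (X - Y) = fps_const (1/2) * (2 * fps_deriv X - 2 * fps_deriv Y)"
    by (simp add: fps_numeral_fps_const algebra_simps)
  also have "\<dots> = fps_const (1/2) * (X + Y) * (X - Y)"
    using assms(1,2) by (simp add: algebra_simps)
  finally have "X - Y = 0"
    by (rule fps_eq_0_if_deriv_eq_mult) (simp add: assms(3))
  then show ?thesis
    by simp
qed

text \<open>Here \<open>F - (F oo - fps_X)\<close> is twice the odd part of \<open>F\<close>; the point is that
  \<open>F(x) F(-x) = 1\<close>.\<close>

lemma fps_riccati_from_odd_part:
  fixes F :: "'a::field_char_0 fps"
  assumes F': "2 * fps_deriv F = 2 + (F - (F oo - fps_X)) * F" and F0: "F $ 0 = 1"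
  shows "2 * fps_deriv F = 1 + F * F"
proof -
  define G where "G = F oo - fps_X"
  have "G oo - fps_X = F"
    unfolding G_def by (rule fps_ext) (simp add: fps_compose_uminus' flip: power_add)
  then have "(2 + (F - G) * F) oo - fps_X = 2 + (G - F) * G"
    by (simp add: fps_compose_add_distrib fps_compose_sub_distrib fps_compose_mult_distrib
        fps_numeral_fps_const G_def)
  moreover have "2 * fps_deriv G = - ((2 * fps_deriv F) oo - fps_X)"
    unfolding G_def by (simp add: fps_compose_deriv fps_compose_mult_distrib fps_numeral_fps_const)
  ultimately have G': "2 * fps_deriv G = - 2 + (F - G) * G"
    by (simp add: F' flip: G_def) (simp add: algebra_simps)
  have "2 * fps_deriv (F * G - 1) = (2 * fps_deriv F) * G + F * (2 * fps_deriv G)"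
    by (simp add: algebra_simps)
  also have "\<dots> = 2 * ((F - G) * (F * G - 1))"
    unfolding F' G' by (simp add: algebra_simps flip: G_def)
  finally have "fps_deriv (F * G - 1) = (F - G) * (F * G - 1)"
    by (subst (asm) mult_left_cancel) (simp_all add: fps_numeral_fps_const)
  then have "F * G - 1 = 0"
    by (rule fps_eq_0_if_deriv_eq_mult) (simp add: G_def F0)
  then show ?thesis
    unfolding F' by (simp add: algebra_simps flip: G_def)
qed

definition zigzag_egf :: "'a::field_char_0 fps" where
  "zigzag_egf = Abs_fps (\<lambda>n. of_nat (zigzag n) / fact n)"

lemma zigzag_Suc_div_fact:
  assumes "n \<noteq> 0"
  shows "of_nat (zigzag (Suc n)) / fact n =
           (\<Sum>k \<le> n. (if odd k then zigzag_egf $ k else 0) *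
                     (zigzag_egf $ (n - k) :: 'a::field_char_0))"
proof -
  have "of_nat (zigzag (Suc n)) / (fact n :: 'a) =
          (\<Sum>k | k \<le> n \<and> odd k.
             of_nat (n choose k) * of_nat (zigzag k) * of_nat (zigzag (n - k)) / fact n)"
    using assms by (simp add: zigzag.simps(2) sum_divide_distrib)
  also have "\<dots> = (\<Sum>k \<in> {k \<in> {..n}. odd k}. zigzag_egf $ k * zigzag_egf $ (n - k))"
    by (intro sum.cong) (auto simp: zigzag_egf_def binomial_fact)
  also have "\<dots> = (\<Sum>k \<le> n. (if odd k then zigzag_egf $ k else 0) * zigzag_egf $ (n - k))"
    by (subst sum.inter_filter) (auto intro: sum.cong)
  finally show ?thesis .
qed

lemma fps_deriv_zigzag_egf:
  "2 * fps_deriv zigzag_egf =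
     2 + (zigzag_egf - (zigzag_egf oo - fps_X)) * (zigzag_egf :: 'a::field_char_0 fps)"
proof (rule fps_ext)
  fix n
  have odd_part:
    "(zigzag_egf - (zigzag_egf oo - fps_X)) $ k = (if odd k then 2 * zigzag_egf $ k else 0)"
    for k :: nat
    by (simp add: fps_compose_uminus')
  have "(2 * fps_deriv zigzag_egf) $ n = 2 * (of_nat (Suc n) * zigzag_egf $ Suc n :: 'a)"
    by (simp add: fps_numeral_fps_const)
  also have "of_nat (Suc n) * zigzag_egf $ Suc n = (of_nat (zigzag (Suc n)) / fact n :: 'a)"
    by (simp add: zigzag_egf_def del: of_nat_Suc)
  finally have deriv:
    "(2 * fps_deriv zigzag_egf) $ n = 2 * (of_nat (zigzag (Suc n)) / fact n :: 'a)" .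
  have "((zigzag_egf - (zigzag_egf oo - fps_X)) * zigzag_egf) $ n =
          (\<Sum>k \<le> n. (if odd k then 2 * zigzag_egf $ k else 0) * (zigzag_egf $ (n - k) :: 'a))"
    by (simp only: fps_mult_nth odd_part atLeast0AtMost)
  also have "\<dots> = 2 * (\<Sum>k \<le> n. (if odd k then zigzag_egf $ k else 0) * zigzag_egf $ (n - k))"
    by (subst sum_distrib_left) (intro sum.cong refl, simp)
  finally have product: "((zigzag_egf - (zigzag_egf oo - fps_X)) * zigzag_egf) $ n =
          2 * (\<Sum>k \<le> n. (if odd k then zigzag_egf $ k else 0) * (zigzag_egf $ (n - k) :: 'a))" .
  show "(2 * fps_deriv zigzag_egf) $ n =
      (2 + (zigzag_egf - (zigzag_egf oo - fps_X)) * (zigzag_egf :: 'a fps)) $ n"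
  proof (cases "n = 0")
    case True
    then show ?thesis
      using deriv product by (simp add: zigzag.simps(2) fps_numeral_nth zigzag_egf_def)
  next
    case False
    then show ?thesis
      using deriv product by (simp add: zigzag_Suc_div_fact fps_numeral_nth)
  qed
qed

lemma zigzag_egf_riccati:
  "2 * fps_deriv zigzag_egf = 1 + zigzag_egf * (zigzag_egf :: 'a::field_char_0 fps)"
  by (rule fps_riccati_from_odd_part[OF fps_deriv_zigzag_egf]) (simp add: zigzag_egf_def)

text \<open>\<open>tan (z/2 + pi/4) = sec z + tan z\<close>; this form exhibits the poles \<open>pi/2 + 2 pi k\<close>.\<close>

definition sec_plus_tan :: "complex \<Rightarrow> complex" where
  "sec_plus_tan z = tan (z / 2 + of_real pi / 4)"

lemma cos_half_plus_quarter_pi_nonzero: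
  fixes z :: complex
  assumes "norm z < 3" and "z \<noteq> of_real (pi / 2)"
  shows "cos (z / 2 + of_real pi / 4) \<noteq> 0"
proof
  assume "cos (z / 2 + of_real pi / 4) = 0"
  then obtain k :: int where "z / 2 + of_real pi / 4 = of_real (k * pi) + of_real pi / 2"
    by (auto simp: cos_eq_0)
  then have "z * 4 = of_real (2 * k * pi + pi / 2) * 4"
    by (simp add: field_simps)
  then have z: "z = of_real (2 * k * pi + pi / 2)"
    by (subst (asm) mult_right_cancel) simp_all
  with assms(2) have "k \<noteq> 0"
    by auto
  then have "pi \<le> \<bar>real_of_int k\<bar> * pi"
    by (simp add: mult_le_cancel_right1)
  then have "2 * pi \<le> \<bar>2 * k * pi\<bar>"
    by (simp add: abs_mult)
  moreover have "\<bar>2 * k * pi\<bar> \<le> \<bar>2 * k * pi + pi / 2\<bar> + pi / 2"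
    using abs_triangle_ineq[of "2 * k * pi + pi / 2" "- pi / 2"] by simp
  ultimately have "3 * pi / 2 \<le> \<bar>2 * k * pi + pi / 2\<bar>"
    by linarith
  with assms(1) z pi_gt3 show False
    by (simp only: norm_of_real)
qed

lemma sec_plus_tan_has_derivative:
  assumes "norm z < 3" and "z \<noteq> of_real (pi / 2)"
  shows "(sec_plus_tan has_field_derivative (1 + sec_plus_tan z ^ 2) / 2) (at z)"
proof -
  let ?w = "z / 2 + of_real pi / 4"
  have "cos ?w \<noteq> 0"
    using assms by (rule cos_half_plus_quarter_pi_nonzero)
  then have "(sec_plus_tan has_field_derivative inverse (cos ?w ^ 2) * (1 / 2)) (at z)"
    unfolding sec_plus_tan_def[abs_def]
    by (auto intro!: derivative_eq_intros DERIV_tan)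
  also have "inverse (cos ?w ^ 2) = 1 + sec_plus_tan z ^ 2"
    using tan_sec[OF \<open>cos ?w \<noteq> 0\<close>] by (simp add: sec_plus_tan_def power_inverse)
  finally show ?thesis
    by simp
qed

lemma fps_expansion_riccati:
  assumes "open S" and "0 \<in> S"
    and deriv: "\<And>z. z \<in> S \<Longrightarrow> (f has_field_derivative (1 + f z ^ 2) / 2) (at z)"
  shows "2 * fps_deriv (fps_expansion f 0) = 1 + fps_expansion f 0 * fps_expansion f 0"
proof -
  have "f holomorphic_on S"
    using deriv field_differentiable_def holomorphic_on_open[OF assms(1)] by blast
  then have expansion: "f has_fps_expansion fps_expansion f 0"
    using assms by (intro has_fps_expansion_fps_expansion)
  have ode: "eventually (\<lambda>z. 1 + f z * f z = 2 * deriv f z) (nhds 0)"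
    using eventually_nhds_in_open[OF assms(1,2)]
    by (rule eventually_mono) (simp add: DERIV_imp_deriv[OF deriv] power2_eq_square)
  have "(\<lambda>z. 1 + f z * f z) has_fps_expansion 1 + fps_expansion f 0 * fps_expansion f 0"
    by (intro has_fps_expansion_add has_fps_expansion_1 has_fps_expansion_mult expansion)
  then have "(\<lambda>z. 2 * deriv f z) has_fps_expansion 1 + fps_expansion f 0 * fps_expansion f 0"
    using has_fps_expansion_cong[OF ode refl] by simp
  moreover have "(\<lambda>z. 2 * deriv f z) has_fps_expansion 2 * fps_deriv (fps_expansion f 0)"
    using has_fps_expansion_cmult_left[OF has_fps_expansion_deriv[OF expansion], of 2]
    by (simp add: fps_numeral_fps_const)
  ultimately show ?thesis
    by (rule fps_expansion_unique_complex[rotated])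
qed

theorem has_fps_expansion_sec_plus_tan: "sec_plus_tan has_fps_expansion zigzag_egf"
proof -
  have deriv: "(sec_plus_tan has_field_derivative (1 + sec_plus_tan z ^ 2) / 2) (at z)"
    if "z \<in> ball 0 (pi / 2)" for z
  proof (rule sec_plus_tan_has_derivative)
    have "norm z < pi / 2"
      using that by simp
    then show "norm z < 3"
      using pi_less_4 by simp
    show "z \<noteq> of_real (pi / 2)"
    proof
      assume "z = of_real (pi / 2)"
      with \<open>norm z < pi / 2\<close> have "norm (complex_of_real (pi / 2)) < pi / 2"
        by (simp only:)
      then show False
        by simp
    qed
  qed
  then have "sec_plus_tan holomorphic_on ball 0 (pi / 2)"
    using field_differentiable_def holomorphic_on_open by blast
  then have expansion: "sec_plus_tan has_fps_expansion fps_expansion sec_plus_tan 0"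
    by (intro has_fps_expansion_fps_expansion) auto
  have "sec_plus_tan 0 = of_real (tan (pi / 4))"
    by (simp add: sec_plus_tan_def tan_of_real)
  then have initial: "fps_expansion sec_plus_tan 0 $ 0 = zigzag_egf $ 0"
    using has_fps_expansion_imp_0_eq_fps_nth_0[OF expansion]
    by (simp add: zigzag_egf_def tan_45)
  have "2 * fps_deriv (fps_expansion sec_plus_tan 0) =
          1 + fps_expansion sec_plus_tan 0 * fps_expansion sec_plus_tan 0"
    by (rule fps_expansion_riccati[of "ball 0 (pi / 2)"]) (simp_all add: deriv)
  then have "fps_expansion sec_plus_tan 0 = zigzag_egf"
    using zigzag_egf_riccati initial by (rule fps_riccati_unique)
  with expansion show ?thesis
    by simp
qed

definition dslope :: "(complex \<Rightarrow> complex) \<Rightarrow> complex \<Rightarrow> complex \<Rightarrow> complex" where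
  "dslope f a z = (if z = a then deriv f a else (f z - f a) / (z - a))"

lemma holomorphic_on_dslope:
  assumes "f holomorphic_on S" and "open S"
  shows "dslope f a holomorphic_on S"
  using pole_lemma_open[OF assms, of a] unfolding dslope_def[abs_def] .

text \<open>With \<open>c = (z - z0) Q\<close> and \<open>s - a Q = (z - z0) R\<close> for \<open>a = s(z0) / c'(z0)\<close>, one gets
  \<open>s / c = R / Q + a / (z - z0)\<close>.\<close>

lemma quotient_simple_pole_decomposition:
  assumes "open S" and "s holomorphic_on S" and "c holomorphic_on S"
    and "c z0 = 0" and "deriv c z0 \<noteq> 0" and "\<And>z. z \<in> S \<Longrightarrow> z \<noteq> z0 \<Longrightarrow> c z \<noteq> 0"
  obtains h where "h holomorphic_on S"
    and "\<And>z. z \<in> S \<Longrightarrow> z \<noteq> z0 \<Longrightarrow> s z / c z = h z + s z0 / deriv c z0 / (z - z0)"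
proof -
  define a where "a = s z0 / deriv c z0"
  define Q where "Q = dslope c z0"
  define R where "R = dslope (\<lambda>z. s z - a * Q z) z0"
  have Q_z0: "Q z0 = deriv c z0"
    by (simp add: Q_def dslope_def)
  have c_eq: "c z = (z - z0) * Q z" and s_eq: "s z = (z - z0) * R z + a * Q z" if "z \<noteq> z0" for z
    using that assms(4,5) Q_z0 by (simp_all add: Q_def R_def dslope_def a_def)
  have "Q holomorphic_on S"
    unfolding Q_def using assms(3,1) by (rule holomorphic_on_dslope)
  moreover from this have "R holomorphic_on S"
    unfolding R_def using assms(1,2) by (intro holomorphic_on_dslope holomorphic_intros)
  moreover have Q_nonzero: "Q z \<noteq> 0" if "z \<in> S" for z
    using that assms(5) assms(6)[of z] c_eq[of z] Q_z0 by (cases "z = z0") auto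
  ultimately show ?thesis
  proof (intro that)
    show "(\<lambda>z. R z / Q z) holomorphic_on S"
      using \<open>Q holomorphic_on S\<close> \<open>R holomorphic_on S\<close> Q_nonzero by (auto intro!: holomorphic_intros)
    fix z assume "z \<in> S" "z \<noteq> z0"
    then have "z - z0 \<noteq> 0" "Q z \<noteq> 0"
      using Q_nonzero by auto
    then show "s z / c z = R z / Q z + s z0 / deriv c z0 / (z - z0)"
      unfolding c_eq[OF \<open>z \<noteq> z0\<close>] s_eq[OF \<open>z \<noteq> z0\<close>] a_def[symmetric]
      by (simp add: field_simps)
  qed
qed

lemma sec_plus_tan_pole_decomposition:
  obtains h where "h holomorphic_on ball 0 3"
    and "\<And>z. z \<in> ball 0 3 \<Longrightarrow> z \<noteq> of_real (pi / 2) \<Longrightarrow>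
           sec_plus_tan z = h z + 2 / (of_real (pi / 2) - z)"
proof -
  define z0 :: complex where "z0 = of_real (pi / 2)"
  define c s :: "complex \<Rightarrow> complex"
    where "c z = cos (z / 2 + of_real pi / 4)" and "s z = sin (z / 2 + of_real pi / 4)" for z
  have z0: "z0 / 2 + of_real pi / 4 = of_real (pi / 2)"
    by (simp add: z0_def field_simps)
  have "(c has_field_derivative - sin (z0 / 2 + of_real pi / 4) * (1 / 2)) (at z0)"
    unfolding c_def[abs_def] by (auto intro!: derivative_eq_intros)
  then have "deriv c z0 = - 1 / 2"
    by (simp add: DERIV_imp_deriv z0 flip: sin_of_real)
  moreover have "c z0 = 0" "s z0 = 1"
    by (simp_all add: c_def s_def z0 flip: cos_of_real sin_of_real)
  moreover have "c z \<noteq> 0" if "z \<in> ball 0 3" "z \<noteq> z0" for z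
    using that unfolding c_def z0_def by (intro cos_half_plus_quarter_pi_nonzero) auto
  moreover have "s holomorphic_on ball 0 3" "c holomorphic_on ball 0 3"
    unfolding c_def[abs_def] s_def[abs_def] by (auto intro!: holomorphic_intros)
  ultimately obtain h where h: "h holomorphic_on ball 0 3"
    and h_eq: "\<And>z. z \<in> ball 0 3 \<Longrightarrow> z \<noteq> z0 \<Longrightarrow> s z / c z = h z + 1 / (- 1 / 2) / (z - z0)"
    using quotient_simple_pole_decomposition[of "ball 0 3" s c z0] by auto
  show ?thesis
  proof (rule that[OF h])
    fix z :: complex assume "z \<in> ball 0 3" "z \<noteq> of_real (pi / 2)"
    moreover have "sec_plus_tan z = s z / c z"
      by (simp add: sec_plus_tan_def tan_def c_def s_def)
    ultimately show "sec_plus_tan z = h z + 2 / (of_real (pi / 2) - z)"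
      using h_eq[of z] unfolding z0_def[symmetric] by (simp add: field_simps)
  qed
qed

lemma fps_expansion_nth_bound:
  assumes "f holomorphic_on ball 0 R" and "0 < r" and "r < R"
  obtains B where "\<And>n. norm (fps_expansion f 0 $ n) \<le> B / r ^ n"
proof -
  have "cball 0 r \<subseteq> ball (0::complex) R"
    using assms by auto
  then have cont: "continuous_on (cball 0 r) f"
    using assms(1) holomorphic_on_imp_continuous_on continuous_on_subset by blast
  then obtain B where "\<forall>w \<in> f ` cball 0 r. norm w \<le> B"
    using compact_imp_bounded[OF compact_continuous_image[OF cont compact_cball]]
    by (auto simp: bounded_iff)
  then have B: "\<And>z. z \<in> cball 0 r \<Longrightarrow> norm (f z) \<le> B"
    by blast
  have "f has_fps_expansion fps_expansion f 0"
    using assms by (intro has_fps_expansion_fps_expansion) auto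
  then have "norm (fps_expansion f 0 $ n) = norm ((deriv ^^ n) f 0) / fact n" for n
    by (simp add: fps_nth_fps_expansion norm_divide)
  also have "norm ((deriv ^^ n) f 0) \<le> fact n * B / r ^ n" for n
    using assms \<open>cball 0 r \<subseteq> ball 0 R\<close> B
    by (intro Cauchy_inequality cont) auto
  then have "norm ((deriv ^^ n) f 0) / fact n \<le> B / r ^ n" for n
    by (simp add: divide_le_eq field_simps)
  finally show ?thesis
    using that by blast
qed

lemma fps_nth_eq_if_const_minus_X_mult:
  fixes F :: "'a::field fps"
  assumes "(fps_const a - fps_X) * F = fps_const c" and "a \<noteq> 0"
  shows "F $ n = c / a ^ Suc n"
proof -
  have coeff: "a * F $ k - (if k = 0 then 0 else F $ (k - 1)) = (if k = 0 then c else 0)" for k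
    using arg_cong[OF assms(1), of "\<lambda>G. G $ k"]
    by (simp add: left_diff_distrib del: fps_nth_fps_const) (simp split: if_splits)
  show ?thesis
  proof (induction n)
    case 0
    then show ?case
      using coeff[of 0] assms(2) by (simp add: field_simps)
  next
    case (Suc n)
    have "F $ Suc n = F $ n / a"
      using coeff[of "Suc n"] assms(2) by (simp add: field_simps)
    then show ?case
      using Suc.IH by (simp add: field_simps)
  qed
qed

definition zigzag_normalized :: "nat \<Rightarrow> real" where
  "zigzag_normalized n = real (zigzag n) / fact n * (pi / 2) ^ Suc n"

lemma zigzag_div_fact_approx:
  obtains B where "\<And>n. \<bar>real (zigzag n) / fact n - 2 / (pi / 2) ^ Suc n\<bar> \<le> B / 2 ^ n"
proof -
  define z0 :: complex where "z0 = of_real (pi / 2)"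
  obtain h where h_holo: "h holomorphic_on ball 0 3"
    and h_eq: "\<And>z. z \<in> ball 0 3 \<Longrightarrow> z \<noteq> z0 \<Longrightarrow> sec_plus_tan z = h z + 2 / (z0 - z)"
    using sec_plus_tan_pole_decomposition unfolding z0_def by blast
  define H where "H = fps_expansion h 0"
  have "h has_fps_expansion H"
    unfolding H_def using h_holo by (intro has_fps_expansion_fps_expansion) auto
  then have expansion: "(\<lambda>z. (z0 - z) * (sec_plus_tan z - h z)) has_fps_expansion
                          (fps_const z0 - fps_X) * (zigzag_egf - H)"
    by (intro has_fps_expansion_mult has_fps_expansion_diff has_fps_expansion_const
        has_fps_expansion_fps_X has_fps_expansion_sec_plus_tan)
  have pole: "eventually (\<lambda>z. (z0 - z) * (sec_plus_tan z - h z) = 2) (nhds 0)"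
  proof (rule eventually_mono[OF eventually_nhds_in_open[of "ball 0 (pi / 2)" 0]])
    fix z :: complex assume "z \<in> ball 0 (pi / 2)"
    then have "norm z < pi / 2" "norm z0 = pi / 2"
      by (simp_all add: z0_def)
    with pi_less_4 have "z \<noteq> z0" "z \<in> ball 0 3"
      by auto
    then have "sec_plus_tan z = h z + 2 / (z0 - z)" "z0 - z \<noteq> 0"
      using h_eq by auto
    then show "(z0 - z) * (sec_plus_tan z - h z) = 2"
      by (simp add: field_simps)
  qed auto
  have "(\<lambda>z. 2) has_fps_expansion (fps_const z0 - fps_X) * (zigzag_egf - H)"
    using has_fps_expansion_cong[OF pole refl] expansion by simp
  then have "(fps_const z0 - fps_X) * (zigzag_egf - H) = fps_const 2"
    using has_fps_expansion_const by (rule fps_expansion_unique_complex)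
  then have "(zigzag_egf - H) $ n = 2 / z0 ^ Suc n" for n
    by (rule fps_nth_eq_if_const_minus_X_mult) (simp add: z0_def)
  then have H_nth: "H $ n = of_real (real (zigzag n) / fact n - 2 / (pi / 2) ^ Suc n)" for n
    by (simp add: zigzag_egf_def z0_def algebra_simps)
  obtain B where B: "\<And>n. norm (H $ n) \<le> B / 2 ^ n"
    unfolding H_def using h_holo by (rule fps_expansion_nth_bound) auto
  show ?thesis
  proof (rule that)
    show "\<bar>real (zigzag n) / fact n - 2 / (pi / 2) ^ Suc n\<bar> \<le> B / 2 ^ n" for n
      using B[of n] unfolding H_nth norm_of_real .
  qed
qed

theorem zigzag_normalized_tendsto: "zigzag_normalized \<longlonglongrightarrow> 2"
proof -
  obtain B where B: "\<And>n. \<bar>real (zigzag n) / fact n - 2 / (pi / 2) ^ Suc n\<bar> \<le> B / 2 ^ n"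
    using zigzag_div_fact_approx by blast
  have bound: "norm (zigzag_normalized n - 2) \<le> B * (pi / 2) * (pi / 4) ^ n" for n
  proof -
    have "(4::real) ^ n = 2 ^ n * 2 ^ n"
      by (simp flip: power_mult_distrib)
    then have scale: "B / 2 ^ n * (pi / 2) ^ Suc n = B * (pi / 2) * (pi / 4) ^ n"
      by (simp add: field_simps)
    have "zigzag_normalized n - 2 =
            (real (zigzag n) / fact n - 2 / (pi / 2) ^ Suc n) * (pi / 2) ^ Suc n"
      by (simp add: zigzag_normalized_def left_diff_distrib)
    then have "norm (zigzag_normalized n - 2) =
                 \<bar>real (zigzag n) / fact n - 2 / (pi / 2) ^ Suc n\<bar> * (pi / 2) ^ Suc n"
      by (simp only: real_norm_def abs_mult) simp
    also have "\<dots> \<le> B / 2 ^ n * (pi / 2) ^ Suc n"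
      using B by (intro mult_right_mono) auto
    finally show ?thesis
      by (simp only: scale)
  qed
  have "(\<lambda>n. B * (pi / 2) * (pi / 4) ^ n) \<longlonglongrightarrow> 0"
    using pi_less_4 by (intro tendsto_mult_right_zero LIMSEQ_power_zero) auto
  with always_eventually[OF allI[OF bound]] have "(\<lambda>n. zigzag_normalized n - 2) \<longlonglongrightarrow> 0"
    by (rule Lim_null_comparison)
  then show ?thesis
    by (rule LIM_zero_cancel)
qed

lemma zigzag_normalized_ratio:
  "pi / 4 * zigzag_normalized k / zigzag_normalized (Suc k) =
     real (Suc k) / 2 * real (zigzag k) / real (zigzag (Suc k))"
proof -
  define P F where "P = (pi / 2) ^ Suc k" and "F = (fact k :: real)"
  have "P > 0" "F > 0"
    by (simp_all add: P_def F_def)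
  have "zigzag_normalized k = real (zigzag k) / F * P"
    and "zigzag_normalized (Suc k) = real (zigzag (Suc k)) / (real (Suc k) * F) * (P * (pi / 2))"
    by (simp_all add: zigzag_normalized_def P_def F_def del: of_nat_Suc)
  then show ?thesis
    using \<open>P > 0\<close> \<open>F > 0\<close>
    by (cases "zigzag (Suc k) = 0") (simp_all only:, simp_all add: field_simps)
qed

lemma A0_div_A_eq:
  assumes "m \<noteq> 0"
  shows "real (A0 (2 * m)) / real (A (2 * m)) =
           pi / 4 * zigzag_normalized (2 * m - 1) / zigzag_normalized (2 * m)"
proof -
  obtain k where k: "2 * m = Suc k"
    using assms by (cases "2 * m") auto
  have "real (A0 (2 * m)) / real (A (2 * m)) = real m * real (zigzag k) / real (zigzag (Suc k))"
    using A0_eq_zigzag[OF assms] A_eq_zigzag[of "2 * m"] k by simp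
  also have "real m = real (Suc k) / 2"
    using arg_cong[OF k, of real] by simp
  also have "real (Suc k) / 2 * real (zigzag k) / real (zigzag (Suc k)) =
               pi / 4 * zigzag_normalized k / zigzag_normalized (Suc k)"
    by (rule zigzag_normalized_ratio[symmetric])
  finally show ?thesis
    using k by simp
qed

theorem mainTheorem11:
  shows "(\<lambda>m. real (A0 (2 * m)) / real (A (2 * m))) \<longlonglongrightarrow> pi / 4"
proof -
  have "strict_mono (\<lambda>m::nat. 2 * m - 1)" "strict_mono (\<lambda>m::nat. 2 * m)"
    by (auto simp: strict_mono_Suc_iff)
  then have "(\<lambda>m. zigzag_normalized (2 * m - 1)) \<longlonglongrightarrow> 2"
    and "(\<lambda>m. zigzag_normalized (2 * m)) \<longlonglongrightarrow> 2"
    using LIMSEQ_subseq_LIMSEQ[OF zigzag_normalized_tendsto] by (auto simp: o_def)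
  then have "(\<lambda>m. pi / 4 * zigzag_normalized (2 * m - 1) / zigzag_normalized (2 * m))
               \<longlonglongrightarrow> pi / 4 * 2 / 2"
    by (intro tendsto_intros) auto
  moreover have "eventually (\<lambda>m. pi / 4 * zigzag_normalized (2 * m - 1) /
                   zigzag_normalized (2 * m) = real (A0 (2 * m)) / real (A (2 * m))) sequentially"
    using eventually_gt_at_top[of 0] by eventually_elim (simp add: A0_div_A_eq)
  ultimately show ?thesis
    by (simp add: Lim_transform_eventually)
qed

end
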